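(* Up to isomorphism, there are exactly five Frobenius objects in $\mathbf{Rel}$ whose underlying set has two elements. Writing the set as $X=\{a,b\}$, they are (pairwise non-isomorphic): (1) $\eta=\{a\}$, $\varepsilon=\{a\}$, $\tilde\mu(a,a)=\{a\}$, $\tilde\mu(a,b)=\tilde\mu(b,a)=\{b\}$, $\tilde\mu(b,b)=\{a\}$; (2) $\eta=\{a\}$, $\varepsilon=\{a\}$, $\tilde\mu(a,a)=\{a\}$, $\tilde\mu(a,b)=\tilde\mu(b,a)=\{b\}$, $\tilde\mu(b,b)=\{a,b\}$; (3) $\eta=\{a\}$, $\varepsilon=\{b\}$, $\tilde\mu(a,a)=\{a\}$, $\tilde\mu(a,b)=\tilde\mu(b,a)=\{b\}$, $\tilde\mu(b,b)=\{a\}$; (4) $\eta=\{a\}$, $\varepsilon=\{b\}$, $\tilde\mu(a,a)=\{a\}$, $\tilde\mu(a,b)=\tilde\mu(b,a)=\{b\}$, $\tilde\mu(b,b)=\emptyset$; (5) $\eta=\{a,b\}$, $\varepsilon=\{a,b\}$, $\tilde\mu(a,a)=\{a\}$, $\tilde\mu(b,b)=\{b\}$, $\tilde\mu(a,b)=\tilde\mu(b,a)=\emptyset$.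
   Context: $\mathbf{Rel}$ is the monoidal category whose objects are sets, morphisms $X\to Y$ are relations $R\subseteq X\times Y$, composition is $S\circ R=\{(x,z):\exists y,(x,y)\in R,(y,z)\in S\}$, identities are diagonals, the monoidal product is the Cartesian product and the unit is $\{\bullet\}$. A relation $R\subseteq X\times Y$ is identified with $\tilde R:X\to\mathcal{P}(Y)$, $\tilde R(x)=\{y:(x,y)\in R\}$. A Frobenius object in $\mathbf{Rel}$ is a set $X$ with unit $\eta\subseteq X$ (relation $\{\bullet\}\to X$), counit $\varepsilon\subseteq X$ (relation $X\to\{\bullet\}$) and multiplication $\mu\subseteq X\times X\times X$ (relation $X\times X\to X$, described by $\tilde\mu:X\times X\to\mathcal{P}(X)$) satisfying unitality $\mu\circ(\mathbf{1}\times\eta)=\mu\circ(\eta\times\mathbf{1})=\mathbf{1}$, associativity $\mu\circ(\mathbf{1}\times\mu)=\mu\circ(\mu\times\mathbf{1})$, and nondegeneracy: there exists a relation $\beta:\{\bullet\}\to X\times X$ with $(\varepsilon\times\mathbf{1})\circ(\mu\times\mathbf{1})\circ(\mathbf{1}\times\beta)=(\mathbf{1}\times\varepsilon)\circ(\mathbf{1}\times\mu)\circ(\beta\times\mathbf{1})=\mathbf{1}$. An isomorphism between Frobenius objects $(X,\eta,\varepsilon,\tilde\mu)$ and $(X',\eta',\varepsilon',\tilde\mu')$ is a bijection $f:X\to X'$ with $f(\eta)=\eta'$, $f(\varepsilon)=\varepsilon'$ and $\tilde\mu'(f(x),f(y))=f(\tilde\mu(x,y))$ for all $x,y\in X$.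 *)

theory Defs
  imports Main
begin

text \<open>
  A Frobenius object in Rel on a set X is given by
    eta \<subseteq> X  (the unit relation {*} -> X),
    eps \<subseteq> X  (the counit relation X -> {*}),
    mu :: 'a => 'a => 'a set  (the multiplication X x X -> X, written as the map mu-tilde
                               into the power set; only its values on X x X matter).
  The axioms below are the equations of relations in Rel written out element-wise
  (composition of relations, identity = diagonal, Cartesian product of relations,
  with the canonical unitors/associators of (Rel, x, {*})).
\<close>

definition frobenius_rel :: "'a set \<Rightarrow> 'a set \<Rightarrow> 'a set \<Rightarrow> ('a \<Rightarrow> 'a \<Rightarrow> 'a set) \<Rightarrow> bool" where
  "frobenius_rel X \<eta> \<epsilon> \<mu> \<longleftrightarrow>
     \<comment> \<open>well-formedness: eta, eps, mu are relations on X\<close>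
     \<eta> \<subseteq> X \<and> \<epsilon> \<subseteq> X \<and> (\<forall>x\<in>X. \<forall>y\<in>X. \<mu> x y \<subseteq> X) \<and>
     \<comment> \<open>unitality: mu o (1 x eta) = 1\<close>
     (\<forall>x\<in>X. \<forall>z\<in>X. (\<exists>e\<in>\<eta>. z \<in> \<mu> x e) \<longleftrightarrow> z = x) \<and>
     \<comment> \<open>unitality: mu o (eta x 1) = 1\<close>
     (\<forall>x\<in>X. \<forall>z\<in>X. (\<exists>e\<in>\<eta>. z \<in> \<mu> e x) \<longleftrightarrow> z = x) \<and>
     \<comment> \<open>associativity: mu o (1 x mu) = mu o (mu x 1)\<close>
     (\<forall>x\<in>X. \<forall>y\<in>X. \<forall>z\<in>X. \<forall>w\<in>X.
        (\<exists>v\<in>X. v \<in> \<mu> y z \<and> w \<in> \<mu> x v) \<longleftrightarrow> (\<exists>u\<in>X. u \<in> \<mu> x y \<and> w \<in> \<mu> u z)) \<and>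
     \<comment> \<open>nondegeneracy: some beta : {*} -> X x X satisfies the two snake equations\<close>
     (\<exists>\<beta>. \<beta> \<subseteq> X \<times> X \<and>
        \<comment> \<open>(eps x 1) o (mu x 1) o (1 x beta) = 1\<close>
        (\<forall>x\<in>X. \<forall>z\<in>X. (\<exists>y\<in>X. (y, z) \<in> \<beta> \<and> (\<exists>w\<in>\<epsilon>. w \<in> \<mu> x y)) \<longleftrightarrow> x = z) \<and>
        \<comment> \<open>(1 x eps) o (1 x mu) o (beta x 1) = 1\<close>
        (\<forall>x\<in>X. \<forall>y\<in>X. (\<exists>z\<in>X. (y, z) \<in> \<beta> \<and> (\<exists>w\<in>\<epsilon>. w \<in> \<mu> z x)) \<longleftrightarrow> x = y))"

definition frob_iso ::
  "'a set \<Rightarrow> 'a set \<Rightarrow> 'a set \<Rightarrow> ('a \<Rightarrow> 'a \<Rightarrow> 'a set) \<Rightarrow>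
   'b set \<Rightarrow> 'b set \<Rightarrow> 'b set \<Rightarrow> ('b \<Rightarrow> 'b \<Rightarrow> 'b set) \<Rightarrow> bool" where
  "frob_iso X \<eta> \<epsilon> \<mu> X' \<eta>' \<epsilon>' \<mu>' \<longleftrightarrow>
     (\<exists>f. bij_betw f X X' \<and> f ` \<eta> = \<eta>' \<and> f ` \<epsilon> = \<epsilon>' \<and>
          (\<forall>x\<in>X. \<forall>y\<in>X. \<mu>' (f x) (f y) = f ` (\<mu> x y)))"

fun model_eta :: "nat \<Rightarrow> 'a \<Rightarrow> 'a \<Rightarrow> 'a set" where
  "model_eta i a b = (if i = 5 then {a, b} else {a})"

fun model_eps :: "nat \<Rightarrow> 'a \<Rightarrow> 'a \<Rightarrow> 'a set" where
  "model_eps i a b = (if i = 1 \<or> i = 2 then {a} else if i = 3 \<or> i = 4 then {b} else {a, b})"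

fun model_mu :: "nat \<Rightarrow> 'a \<Rightarrow> 'a \<Rightarrow> 'a \<Rightarrow> 'a \<Rightarrow> 'a set" where
  "model_mu i a b x y =
     (if x = a \<and> y = a then {a}
      else if (x = a \<and> y = b) \<or> (x = b \<and> y = a) then (if i = 5 then {} else {b})
      else if x = b \<and> y = b then
        (if i = 1 \<or> i = 3 then {a} else if i = 2 then {a, b} else if i = 4 then {} else {b})
      else {})"

end

theory Submission
  imports Defs
begin

(* Unitality alone forces \<mu> x e = \<mu> e x = {x} when the unit is a singleton {e}, and forces \<mu>
   to be the diagonal when the unit is all of X. Nondegeneracy says that the pairing \<epsilon> \<circ> \<mu>,
   read as a relation X \<rightarrow> X, has the two-sided inverse \<beta> in Rel, so it is the graph of a
   bijection. On X = {e, g} this leaves \<epsilon> = X when \<eta> = X (model 5); when \<eta> = {e} it forces \<epsilon>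
   to be a singleton and leaves two choices of \<mu> g g for each (models 1-4). The models are told apart by the isomorphism invariants "\<eta> = \<epsilon>" and the
   number of triples in the graph of \<mu>. *)

lemma inverse_relations_functional:
  assumes right_inverse: "\<forall>x\<in>X. \<forall>z\<in>X. (\<exists>y\<in>X. (y, z) \<in> \<beta> \<and> P x y) \<longleftrightarrow> x = z"
    and left_inverse: "\<forall>x\<in>X. \<forall>y\<in>X. (\<exists>z\<in>X. (y, z) \<in> \<beta> \<and> P z x) \<longleftrightarrow> x = y"
    and "x \<in> X"
  shows "\<exists>!y\<in>X. P x y"
proof -
  have converse: "(y, x) \<in> \<beta>" if "P x y" "x \<in> X" "y \<in> X" for x y
  proof -
    obtain z where "z \<in> X" "(y, z) \<in> \<beta>" "P z y" using left_inverse \<open>y \<in> X\<close> by blast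
    moreover have "x = z" using right_inverse that \<open>z \<in> X\<close> \<open>(y, z) \<in> \<beta>\<close> by blast
    ultimately show ?thesis by simp
  qed
  obtain y where "y \<in> X" "P x y" using right_inverse \<open>x \<in> X\<close> by blast
  moreover have "y = y'" if "y' \<in> X" "P x y'" for y'
  proof -
    have "(y', x) \<in> \<beta>" using converse that \<open>x \<in> X\<close> by blast
    then show ?thesis using left_inverse \<open>P x y\<close> \<open>x \<in> X\<close> \<open>y \<in> X\<close> \<open>y' \<in> X\<close> by blast
  qed
  ultimately show ?thesis by blast
qed

lemma subset_doubleton_cases:
  assumes "S \<subseteq> {c, d}"
  obtains "S = {}" | "S = {c}" | "S = {d}" | "S = {c, d}"
  using assms by (cases "c \<in> S"; cases "d \<in> S") auto

lemma frobenius_rel_subsetD: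
  assumes "frobenius_rel X \<eta> \<epsilon> \<mu>"
  shows "\<eta> \<subseteq> X" and "\<epsilon> \<subseteq> X" and "x \<in> X \<Longrightarrow> y \<in> X \<Longrightarrow> \<mu> x y \<subseteq> X"
  using assms by (simp_all add: frobenius_rel_def)

lemma frobenius_rel_unit_laws:
  assumes "frobenius_rel X \<eta> \<epsilon> \<mu>" and "x \<in> X" and "z \<in> X"
  shows "(\<exists>e\<in>\<eta>. z \<in> \<mu> x e) \<longleftrightarrow> z = x" and "(\<exists>e\<in>\<eta>. z \<in> \<mu> e x) \<longleftrightarrow> z = x"
  using assms by (simp_all add: frobenius_rel_def)

text \<open>The pairing \<epsilon> \<circ> \<mu> of the snake equations, as a relation X \<rightarrow> X.\<close>

definition frobenius_form :: "'a set \<Rightarrow> ('a \<Rightarrow> 'a \<Rightarrow> 'a set) \<Rightarrow> 'a \<Rightarrow> 'a \<Rightarrow> bool" where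
  "frobenius_form \<epsilon> \<mu> x y \<longleftrightarrow> (\<exists>w\<in>\<epsilon>. w \<in> \<mu> x y)"

lemma frobenius_form_unique:
  assumes "frobenius_rel X \<eta> \<epsilon> \<mu>" and "x \<in> X"
  shows "\<exists>!y\<in>X. frobenius_form \<epsilon> \<mu> x y"
proof -
  from assms(1) obtain \<beta> where
    "\<forall>x\<in>X. \<forall>z\<in>X. (\<exists>y\<in>X. (y, z) \<in> \<beta> \<and> (\<exists>w\<in>\<epsilon>. w \<in> \<mu> x y)) \<longleftrightarrow> x = z"
    "\<forall>x\<in>X. \<forall>y\<in>X. (\<exists>z\<in>X. (y, z) \<in> \<beta> \<and> (\<exists>w\<in>\<epsilon>. w \<in> \<mu> z x)) \<longleftrightarrow> x = y"
    unfolding frobenius_rel_def by (elim conjE exE) (rule that)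
  then show ?thesis
    unfolding frobenius_form_def by (rule inverse_relations_functional[OF _ _ assms(2)])
qed

lemma frobenius_rel_singleton_unit:
  assumes F: "frobenius_rel X {e} \<epsilon> \<mu>" and "x \<in> X"
  shows "\<mu> x e = {x}" and "\<mu> e x = {x}"
proof -
  have "e \<in> X" using frobenius_rel_subsetD(1)[OF F] by simp
  have "z \<in> \<mu> x e \<longleftrightarrow> z = x" "z \<in> \<mu> e x \<longleftrightarrow> z = x" if "z \<in> X" for z
    using frobenius_rel_unit_laws[OF F \<open>x \<in> X\<close> that] by simp_all
  moreover have "\<mu> x e \<subseteq> X" "\<mu> e x \<subseteq> X"
    using frobenius_rel_subsetD(3)[OF F] \<open>x \<in> X\<close> \<open>e \<in> X\<close> by simp_all
  ultimately show "\<mu> x e = {x}" "\<mu> e x = {x}"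
    using \<open>x \<in> X\<close> by blast+
qed

lemma frobenius_rel_full_unit:
  assumes F: "frobenius_rel X X \<epsilon> \<mu>" and "x \<in> X" and "y \<in> X"
  shows "\<mu> x y = (if x = y then {x} else {})"
proof -
  have mult_mem: "z = u \<and> z = v" if "z \<in> \<mu> u v" "u \<in> X" "v \<in> X" for z u v
  proof -
    have "z \<in> X" using frobenius_rel_subsetD(3)[OF F] that by blast
    then show ?thesis
      using frobenius_rel_unit_laws[OF F _ \<open>z \<in> X\<close>] that by blast
  qed
  obtain e where "e \<in> X" "x \<in> \<mu> x e"
    using frobenius_rel_unit_laws(1)[OF F \<open>x \<in> X\<close> \<open>x \<in> X\<close>] by blast
  then have "x \<in> \<mu> x x" using mult_mem[of x x e] \<open>x \<in> X\<close> by simp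
  then show ?thesis using mult_mem assms(2,3) by auto
qed

lemma frobenius_rel_full_unit_counit:
  assumes F: "frobenius_rel X X \<epsilon> \<mu>"
  shows "\<epsilon> = X"
proof -
  have "x \<in> \<epsilon>" if "x \<in> X" for x
  proof -
    obtain y where "y \<in> X" "frobenius_form \<epsilon> \<mu> x y"
      using frobenius_form_unique[OF F \<open>x \<in> X\<close>] by blast
    then show ?thesis
      using frobenius_rel_full_unit[OF F \<open>x \<in> X\<close>] by (auto simp: frobenius_form_def split: if_splits)
  qed
  then show ?thesis using frobenius_rel_subsetD(2)[OF F] by blast
qed

lemma frobenius_rel_two_singleton_unit_cases:
  assumes "e \<noteq> g" and F: "frobenius_rel {e, g} {e} \<epsilon> \<mu>"
  shows "\<epsilon> = {e} \<and> (\<mu> g g = {e} \<or> \<mu> g g = {e, g}) \<or> \<epsilon> = {g} \<and> (\<mu> g g = {e} \<or> \<mu> g g = {})"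
proof -
  have unit: "\<mu> x e = {x}" "\<mu> e x = {x}" if "x \<in> {e, g}" for x
    using frobenius_rel_singleton_unit[OF F that] by simp_all
  have "frobenius_form \<epsilon> \<mu> e y \<longleftrightarrow> y \<in> \<epsilon>" if "y \<in> {e, g}" for y
    using unit(2)[OF that] by (simp add: frobenius_form_def)
  then have "\<exists>!y\<in>{e, g}. y \<in> \<epsilon>"
    using frobenius_form_unique[OF F, of e] by (metis insertI1)
  then consider "\<epsilon> = {e}" | "\<epsilon> = {g}"
    using frobenius_rel_subsetD(2)[OF F] by blast
  then show ?thesis
  proof cases
    case 1
    then have "\<not> frobenius_form \<epsilon> \<mu> g e"
      using unit(1)[of g] \<open>e \<noteq> g\<close> by (simp add: frobenius_form_def)
    then have "e \<in> \<mu> g g"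
      using frobenius_form_unique[OF F, of g] 1 by (auto simp: frobenius_form_def)
    then show ?thesis using 1 frobenius_rel_subsetD(3)[OF F, of g g] by auto
  next
    case 2
    then have "frobenius_form \<epsilon> \<mu> g e"
      using unit(1)[of g] by (simp add: frobenius_form_def)
    then have "g \<notin> \<mu> g g"
      using frobenius_form_unique[OF F, of g] 2 \<open>e \<noteq> g\<close> by (auto simp: frobenius_form_def)
    then show ?thesis using 2 frobenius_rel_subsetD(3)[OF F, of g g] by auto
  qed
qed

lemma model_mu_simps [simp]:
  assumes "a \<noteq> b"
  shows "model_mu i a b a a = {a}"
    and "model_mu i a b a b = (if i = 5 then {} else {b})"
    and "model_mu i a b b a = (if i = 5 then {} else {b})"
    and "model_mu i a b b b =
      (if i = 1 \<or> i = 3 then {a} else if i = 2 then {a, b} else if i = 4 then {} else {b})"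
  using assms by auto

declare model_mu.simps [simp del]

lemma frobenius_rel_two_classification:
  fixes X :: "'b set"
  assumes "card X = 2" and F: "frobenius_rel X \<eta> \<epsilon> \<mu>"
  obtains i e g where "i \<in> {1..5}" "e \<noteq> g" "X = {e, g}"
    "\<eta> = model_eta i e g" "\<epsilon> = model_eps i e g" "\<forall>x\<in>X. \<forall>y\<in>X. \<mu> x y = model_mu i e g x y"
proof -
  note classified = that
  obtain c d where X: "X = {c, d}" "c \<noteq> d" using assms(1) by (auto simp: card_2_iff)
  have full_unit: thesis if "\<eta> = X"
  proof (rule classified[of 5 c d])
    have F': "frobenius_rel X X \<epsilon> \<mu>" using F \<open>\<eta> = X\<close> by simp
    show "\<epsilon> = model_eps 5 c d"
      using frobenius_rel_full_unit_counit[OF F'] X by simp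
    show "\<forall>x\<in>X. \<forall>y\<in>X. \<mu> x y = model_mu 5 c d x y"
      using frobenius_rel_full_unit[OF F'] X by auto
  qed (use X \<open>\<eta> = X\<close> in auto)
  have singleton_unit: thesis if eg: "X = {e, g}" "e \<noteq> g" and "\<eta> = {e}" for e g
  proof -
    have F': "frobenius_rel {e, g} {e} \<epsilon> \<mu>" using F that by simp
    have "\<exists>i\<in>{1, 2, 3, 4}. \<epsilon> = model_eps i e g \<and> \<mu> g g = model_mu i e g g g"
      using frobenius_rel_two_singleton_unit_cases[OF \<open>e \<noteq> g\<close> F'] \<open>e \<noteq> g\<close> by auto
    then obtain i where i: "i \<in> {1, 2, 3, 4}" "\<epsilon> = model_eps i e g" "\<mu> g g = model_mu i e g g g"
      by blast
    show thesis
    proof (rule classified[of i e g])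
      show "\<forall>x\<in>X. \<forall>y\<in>X. \<mu> x y = model_mu i e g x y"
        using frobenius_rel_singleton_unit[OF F'] i eg by auto
    qed (use i eg \<open>\<eta> = {e}\<close> in auto)
  qed
  have "\<eta> \<subseteq> {c, d}" using frobenius_rel_subsetD(1)[OF F] X by simp
  then show thesis
  proof (cases rule: subset_doubleton_cases)
    case 1
    then show thesis using frobenius_rel_unit_laws(1)[OF F, of c c] X by auto
  next
    case 2
    then show thesis using singleton_unit[of c d] X by simp
  next
    case 3
    then show thesis using singleton_unit[of d c] X by (simp add: insert_commute)
  next
    case 4
    then show thesis using full_unit X by simp
  qed
qed

lemma frobenius_rel_model:
  assumes "a \<noteq> b" and "i \<in> {1..5}"
  shows "frobenius_rel {a, b} (model_eta i a b) (model_eps i a b) (model_mu i a b)"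
proof -
  have "i = 1 \<or> i = 2 \<or> i = 3 \<or> i = 4 \<or> i = 5" using assms(2) by auto
  \<comment> \<open>\<beta> inverts the pairing, which is the identity for models 1, 2, 5 and the swap for 3, 4\<close>
  then show ?thesis
    unfolding frobenius_rel_def
    by (intro conjI exI[of _ "if i \<in> {3, 4} then {(a, b), (b, a)} else {(a, a), (b, b)}"];
        use assms(1) in \<open>elim disjE; simp\<close>)
qed

lemma frob_iso_model:
  assumes "c \<noteq> d" and "a \<noteq> b"
    and "\<eta> = model_eta i c d" and "\<epsilon> = model_eps i c d"
    and "\<forall>x\<in>{c, d}. \<forall>y\<in>{c, d}. \<mu> x y = model_mu i c d x y"
  shows "frob_iso {c, d} \<eta> \<epsilon> \<mu> {a, b} (model_eta i a b) (model_eps i a b) (model_mu i a b)"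
  unfolding frob_iso_def
proof (intro exI conjI)
  let ?f = "\<lambda>x. if x = c then a else b"
  show "bij_betw ?f {c, d} {a, b}"
    using assms(1,2) by (auto simp: bij_betw_def inj_on_def)
  show "?f ` \<eta> = model_eta i a b" "?f ` \<epsilon> = model_eps i a b"
    using assms(1,3,4) by auto
  show "\<forall>x\<in>{c, d}. \<forall>y\<in>{c, d}. model_mu i a b (?f x) (?f y) = ?f ` \<mu> x y"
    using assms(1,2,5) by auto
qed

definition mult_size :: "'a set \<Rightarrow> ('a \<Rightarrow> 'a \<Rightarrow> 'a set) \<Rightarrow> nat" where
  "mult_size X \<mu> = (\<Sum>x\<in>X. \<Sum>y\<in>X. card (\<mu> x y))"

lemma frob_iso_mult_size:
  assumes "frob_iso X \<eta> \<epsilon> \<mu> X' \<eta>' \<epsilon>' \<mu>'" and "\<forall>x\<in>X. \<forall>y\<in>X. \<mu> x y \<subseteq> X"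
  shows "mult_size X' \<mu>' = mult_size X \<mu>"
proof -
  obtain f where f: "bij_betw f X X'" "\<forall>x\<in>X. \<forall>y\<in>X. \<mu>' (f x) (f y) = f ` \<mu> x y"
    using assms(1) unfolding frob_iso_def by blast
  have "card (\<mu>' (f x) (f y)) = card (\<mu> x y)" if "x \<in> X" "y \<in> X" for x y
    using f that assms(2) by (metis bij_betw_imp_inj_on card_image inj_on_subset)
  then show ?thesis
    unfolding mult_size_def sum.reindex_bij_betw[OF f(1), symmetric] by simp
qed

lemma frob_iso_unit_eq_counit_iff:
  assumes "frob_iso X \<eta> \<epsilon> \<mu> X' \<eta>' \<epsilon>' \<mu>'" and "\<eta> \<subseteq> X" and "\<epsilon> \<subseteq> X"
  shows "\<eta>' = \<epsilon>' \<longleftrightarrow> \<eta> = \<epsilon>"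
proof -
  obtain f where "bij_betw f X X'" "f ` \<eta> = \<eta>'" "f ` \<epsilon> = \<epsilon>'"
    using assms(1) unfolding frob_iso_def by blast
  then show ?thesis
    using inj_on_image_eq_iff[OF bij_betw_imp_inj_on assms(2,3)] by blast
qed

lemma model_not_iso:
  assumes "a \<noteq> b" and "i \<in> {1..5}" and "j \<in> {1..5}" and "i \<noteq> j"
  shows "\<not> frob_iso {a, b} (model_eta i a b) (model_eps i a b) (model_mu i a b)
                   {a, b} (model_eta j a b) (model_eps j a b) (model_mu j a b)"
proof
  assume iso: "frob_iso {a, b} (model_eta i a b) (model_eps i a b) (model_mu i a b)
                   {a, b} (model_eta j a b) (model_eps j a b) (model_mu j a b)"
  note F = frobenius_rel_subsetD[OF frobenius_rel_model[OF assms(1,2)]]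
  have "mult_size {a, b} (model_mu j a b) = mult_size {a, b} (model_mu i a b)"
    using frob_iso_mult_size[OF iso] F(3) by blast
  moreover have "model_eta j a b = model_eps j a b \<longleftrightarrow> model_eta i a b = model_eps i a b"
    using frob_iso_unit_eq_counit_iff[OF iso F(1,2)] .
  moreover have "i = 1 \<or> i = 2 \<or> i = 3 \<or> i = 4 \<or> i = 5" "j = 1 \<or> j = 2 \<or> j = 3 \<or> j = 4 \<or> j = 5"
    using assms(2,3) by auto
  \<comment> \<open>(\<eta> = \<epsilon>, mult_size) is (T, 4), (T, 5), (F, 4), (F, 3), (T, 2) on models 1-5\<close>
  ultimately show False
    using assms(1,4) by (elim disjE) (simp_all add: mult_size_def)
qed

theorem theorem5p1:
  fixes a b :: 'a
  assumes "a \<noteq> b"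
  shows
    "(\<forall>i\<in>{1..5::nat}. frobenius_rel {a, b} (model_eta i a b) (model_eps i a b) (model_mu i a b)) \<and>
     (\<forall>i\<in>{1..5::nat}. \<forall>j\<in>{1..5::nat}. i \<noteq> j \<longrightarrow>
        \<not> frob_iso {a, b} (model_eta i a b) (model_eps i a b) (model_mu i a b)
                   {a, b} (model_eta j a b) (model_eps j a b) (model_mu j a b)) \<and>
     (\<forall>(X :: 'b set) \<eta> \<epsilon> \<mu>. card X = 2 \<and> frobenius_rel X \<eta> \<epsilon> \<mu> \<longrightarrow>
        (\<exists>i\<in>{1..5::nat}. frob_iso X \<eta> \<epsilon> \<mu> {a, b} (model_eta i a b) (model_eps i a b) (model_mu i a b)))"
proof (intro conjI ballI allI impI)
  show "frobenius_rel {a, b} (model_eta i a b) (model_eps i a b) (model_mu i a b)"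
    if "i \<in> {1..5}" for i
    using frobenius_rel_model[OF assms that] .
  show "\<not> frob_iso {a, b} (model_eta i a b) (model_eps i a b) (model_mu i a b)
                   {a, b} (model_eta j a b) (model_eps j a b) (model_mu j a b)"
    if "i \<in> {1..5}" "j \<in> {1..5}" "i \<noteq> j" for i j
    using model_not_iso[OF assms that] .
  fix X :: "'b set" and \<eta> \<epsilon> \<mu>
  assume "card X = 2 \<and> frobenius_rel X \<eta> \<epsilon> \<mu>"
  then obtain i e g where i: "i \<in> {1..5}" and X: "e \<noteq> g" "X = {e, g}"
    and model: "\<eta> = model_eta i e g" "\<epsilon> = model_eps i e g"
      "\<forall>x\<in>X. \<forall>y\<in>X. \<mu> x y = model_mu i e g x y"
    by (elim conjE frobenius_rel_two_classification)
  have "frob_iso X \<eta> \<epsilon> \<mu> {a, b} (model_eta i a b) (model_eps i a b) (model_mu i a b)"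
    using frob_iso_model[OF X(1) assms model(1,2)] model(3) X(2) by simp
  with i show "\<exists>i\<in>{1..5}. frob_iso X \<eta> \<epsilon> \<mu> {a, b} (model_eta i a b) (model_eps i a b) (model_mu i a b)"
    by blast
qed

end
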